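(* Let $\Lambda$ be a countable index set, $\overline{a},\overline{r}$ sequences of positive reals indexed by $\Lambda$, $x^+\in\ell^1_{\overline{r}}$ and $t\in(0,1)$. The following are equivalent: (i) $x^+\in k_t$; (ii) there is $K>0$ such that $\|x^+-x\|_{\overline{r},1}+\|x^+\|_{\overline{r},1}-\|x\|_{\overline{r},1}\le K\|x^+-x\|_{\overline{a},2}^{\frac{2-2t}{2-t}}$ for all $x\in\ell^1_{\overline{r}}$; (iii) there is $K>0$ such that $\|x^+\|_{\overline{r},1}-\|x\|_{\overline{r},1}\le K\|x^+-x\|_{\overline{a},2}^{\frac{2-2t}{2-t}}$ for all $x\in\mathbb{R}^\Lambda$ with $|x_j|\le|x^+_j|$ for all $j\in\Lambda$. More precisely, (i) implies (ii) with $K=\left(2+4(2^{1-t}-1)^{-1}\right)\|x^+\|_{k_t}^{\frac{t}{2-t}}$, and if (iii) holds with constant $K$ then $\|x^+\|_{k_t}\le K^{\frac{2-t}{t}}$.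
   Context: For a sequence $\omega$ of positive reals and $p\in(0,\infty)$, $\|x\|_{\omega,p}=\left(\sum_{j\in\Lambda}\omega_j^p|x_j|^p\right)^{1/p}$ (possibly $+\infty$) and $\ell^p_\omega=\{x\in\mathbb{R}^\Lambda:\|x\|_{\omega,p}<\infty\}$. For $t\in(0,2)$, $k_t=\{x\in\mathbb{R}^\Lambda:\|x\|_{k_t}<\infty\}$ with $\|x\|_{k_t}=\sup_{\alpha>0}\alpha\left(\sum_{j\in\Lambda}\overline{a}_j^{-2}\overline{r}_j^2\mathbf{1}_{\{\overline{a}_j^{-2}\overline{r}_j\alpha<|x_j|\}}\right)^{1/t}$. *)

theory Defs
  imports "HOL-Analysis.Analysis"
begin

text \<open>The countable index set Lambda is modelled by a type of class countable;
  elements of R^Lambda are functions of type 'i => real.\<close>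

definition wnorm :: "('i \<Rightarrow> real) \<Rightarrow> real \<Rightarrow> ('i \<Rightarrow> real) \<Rightarrow> ereal" where
  "wnorm \<omega> p x =
     (if (\<lambda>j. \<omega> j powr p * \<bar>x j\<bar> powr p) summable_on UNIV
      then ereal ((\<Sum>\<^sub>\<infinity>j. \<omega> j powr p * \<bar>x j\<bar> powr p) powr (1 / p))
      else \<infinity>)"

definition lspace :: "('i \<Rightarrow> real) \<Rightarrow> real \<Rightarrow> ('i \<Rightarrow> real) set" where
  "lspace \<omega> p = {x. wnorm \<omega> p x < \<infinity>}"

definition ksum :: "('i \<Rightarrow> real) \<Rightarrow> ('i \<Rightarrow> real) \<Rightarrow> ('i \<Rightarrow> real) \<Rightarrow> real \<Rightarrow> ereal" where
  "ksum a r x \<alpha> =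
     (let f = (\<lambda>j. if (a j)\<^sup>2 powr -1 * r j * \<alpha> < \<bar>x j\<bar> then (a j)\<^sup>2 powr -1 * (r j)\<^sup>2 else 0)
      in if f summable_on UNIV then ereal (\<Sum>\<^sub>\<infinity>j. f j) else \<infinity>)"

definition kterm :: "('i \<Rightarrow> real) \<Rightarrow> ('i \<Rightarrow> real) \<Rightarrow> real \<Rightarrow> ('i \<Rightarrow> real) \<Rightarrow> real \<Rightarrow> ereal" where
  "kterm a r t x \<alpha> =
     (if ksum a r x \<alpha> = \<infinity> then \<infinity> else ereal (\<alpha> * real_of_ereal (ksum a r x \<alpha>) powr (1 / t)))"

definition knorm :: "('i \<Rightarrow> real) \<Rightarrow> ('i \<Rightarrow> real) \<Rightarrow> real \<Rightarrow> ('i \<Rightarrow> real) \<Rightarrow> ereal" where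
  "knorm a r t x = (SUP \<alpha>\<in>{0<..}. kterm a r t x \<alpha>)"

definition kspace :: "('i \<Rightarrow> real) \<Rightarrow> ('i \<Rightarrow> real) \<Rightarrow> real \<Rightarrow> ('i \<Rightarrow> real) set" where
  "kspace a r t = {x. knorm a r t x < \<infinity>}"

text \<open>Condition (ii) with constant K. Since x, x^+ are in l^1_r, the 1-norms are finite;
  if the weighted 2-norm on the right is infinite the inequality holds trivially.\<close>
definition cond_ii :: "('i \<Rightarrow> real) \<Rightarrow> ('i \<Rightarrow> real) \<Rightarrow> real \<Rightarrow> ('i \<Rightarrow> real) \<Rightarrow> real \<Rightarrow> bool" where
  "cond_ii a r t xp K \<longleftrightarrow>
     (\<forall>x \<in> lspace r 1. wnorm a 2 (\<lambda>j. xp j - x j) < \<infinity> \<longrightarrow>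
        real_of_ereal (wnorm r 1 (\<lambda>j. xp j - x j)) + real_of_ereal (wnorm r 1 xp)
          - real_of_ereal (wnorm r 1 x)
        \<le> K * real_of_ereal (wnorm a 2 (\<lambda>j. xp j - x j)) powr ((2 - 2 * t) / (2 - t)))"

text \<open>Condition (iii) with constant K (the 1-norm of such x is finite since |x_j| <= |x^+_j|).\<close>
definition cond_iii :: "('i \<Rightarrow> real) \<Rightarrow> ('i \<Rightarrow> real) \<Rightarrow> real \<Rightarrow> ('i \<Rightarrow> real) \<Rightarrow> real \<Rightarrow> bool" where
  "cond_iii a r t xp K \<longleftrightarrow>
     (\<forall>x :: 'i \<Rightarrow> real. (\<forall>j. \<bar>x j\<bar> \<le> \<bar>xp j\<bar>) \<longrightarrow> wnorm a 2 (\<lambda>j. xp j - x j) < \<infinity> \<longrightarrow>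
        real_of_ereal (wnorm r 1 xp) - real_of_ereal (wnorm r 1 x)
        \<le> K * real_of_ereal (wnorm a 2 (\<lambda>j. xp j - x j)) powr ((2 - 2 * t) / (2 - t)))"

end

theory Submission
  imports Defs
begin

text \<open>
  Write \<open>w j = r j / (a j)\<^sup>2\<close> and let \<open>S(\<alpha>)\<close> be the sum of \<open>(r j / a j)\<^sup>2\<close> over the
  indices with \<open>w j * \<alpha> < |xp j|\<close>. Then \<open>knorm \<le> M\<close> says exactly that
  \<open>S(\<alpha>) \<le> (M / \<alpha>) powr t\<close> for all \<open>\<alpha> > 0\<close>.

  (iii) implies (i): shrinking each counted \<open>|xp j|\<close> by \<open>w j * \<alpha>\<close> lowers the r-norm by
  \<open>\<alpha> * S(\<alpha>)\<close> and moves \<open>xp\<close> by \<open>\<alpha> * sqrt S(\<alpha>)\<close> in the a-norm, so (iii) forces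
  \<open>S(\<alpha>) \<le> K powr (2 - t) * \<alpha> powr -t\<close>.

  (i) implies (ii): with \<open>h = xp - x\<close>, the left-hand side of (ii) is at most
  \<open>2 * (\<Sum>j. r j * min |h j| |xp j|)\<close>. By Cauchy-Schwarz the counted indices contribute at
  most \<open>(M / \<alpha>) powr (t/2)\<close> times the a-norm of \<open>h\<close>. Every other index is counted at
  some dyadic level \<open>\<alpha> / 2^(k+1)\<close>, so these contribute a geometric series of total
  \<open>2 powr t * M powr t * \<alpha> powr (1 - t) / (1 - 2 powr (t - 1))\<close>. Choosing \<open>\<alpha>\<close> to make
  the two terms equal gives the constant.

  (ii) implies (iii) because the first term in (ii) is nonnegative.
\<close>

section \<open>Weighted norms\<close>

lemma has_sum_diff:
  fixes f g :: "'a \<Rightarrow> 'b::topological_ab_group_add"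
  assumes "(f has_sum a) A" and "(g has_sum b) A"
  shows "((\<lambda>x. f x - g x) has_sum (a - b)) A"
proof -
  have "((\<lambda>x. - g x) has_sum - b) A" using assms(2) by (simp add: has_sum_uminus)
  from has_sum_add[OF assms(1) this] show ?thesis by simp
qed

lemma wnorm_nonneg: "0 \<le> wnorm \<omega> p x"
  unfolding wnorm_def by simp

lemma wnorm_1_eq:
  assumes "\<And>j. r j > 0"
  shows "wnorm r 1 y = (if (\<lambda>j. r j * \<bar>y j\<bar>) summable_on UNIV
           then ereal (\<Sum>\<^sub>\<infinity>j. r j * \<bar>y j\<bar>) else \<infinity>)"
proof -
  have "(\<lambda>j. r j powr 1 * \<bar>y j\<bar> powr 1) = (\<lambda>j. r j * \<bar>y j\<bar>)"
    using assms by (intro ext) (simp add: less_imp_le)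
  moreover have "(\<Sum>\<^sub>\<infinity>j. r j * \<bar>y j\<bar>) \<ge> 0"
    using assms by (intro infsum_nonneg) (simp add: less_imp_le)
  ultimately show ?thesis unfolding wnorm_def by simp
qed

lemma lspace_1_iff:
  assumes "\<And>j. r j > 0"
  shows "y \<in> lspace r 1 \<longleftrightarrow> (\<lambda>j. r j * \<bar>y j\<bar>) summable_on UNIV"
  unfolding lspace_def wnorm_1_eq[OF assms] by simp

lemma has_sum_wnorm_1:
  assumes "\<And>j. r j > 0" and "y \<in> lspace r 1"
  shows "((\<lambda>j. r j * \<bar>y j\<bar>) has_sum real_of_ereal (wnorm r 1 y)) UNIV"
  using assms unfolding lspace_1_iff[OF assms(1)] wnorm_1_eq[OF assms(1)] by simp

lemma lspace_1_if_abs_le: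
  assumes r: "\<And>j. r j > 0" and y: "y \<in> lspace r 1" and le: "\<And>j. \<bar>x j\<bar> \<le> \<bar>y j\<bar>"
  shows "x \<in> lspace r 1"
  unfolding lspace_1_iff[OF r]
proof (rule summable_on_comparison_test)
  show "(\<lambda>j. r j * \<bar>y j\<bar>) summable_on UNIV" using y unfolding lspace_1_iff[OF r] .
  show "r j * \<bar>x j\<bar> \<le> r j * \<bar>y j\<bar>" "0 \<le> r j * \<bar>x j\<bar>" for j
    using le[of j] r[of j] by (simp_all add: mult_left_mono)
qed

lemma lspace_1_diff:
  assumes r: "\<And>j. r j > 0" and "x \<in> lspace r 1" and "y \<in> lspace r 1"
  shows "(\<lambda>j. x j - y j) \<in> lspace r 1"
  unfolding lspace_1_iff[OF r]
proof (rule summable_on_comparison_test)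
  show "(\<lambda>j. r j * \<bar>x j\<bar> + r j * \<bar>y j\<bar>) summable_on UNIV"
    using assms by (intro summable_on_add) (simp_all add: lspace_1_iff)
  show "r j * \<bar>x j - y j\<bar> \<le> r j * \<bar>x j\<bar> + r j * \<bar>y j\<bar>" "0 \<le> r j * \<bar>x j - y j\<bar>" for j
    using r[of j] abs_triangle_ineq4[of "x j" "y j"]
    by (simp_all add: distrib_left[symmetric] mult_left_mono)
qed

lemma wnorm_2_eq:
  assumes "\<And>j. a j > 0"
  shows "wnorm a 2 y = (if (\<lambda>j. (a j * y j)\<^sup>2) summable_on UNIV
           then ereal (sqrt (\<Sum>\<^sub>\<infinity>j. (a j * y j)\<^sup>2)) else \<infinity>)"
proof -
  have "(\<lambda>j. a j powr 2 * \<bar>y j\<bar> powr 2) = (\<lambda>j. (a j * y j)\<^sup>2)"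
    using assms by (intro ext) (simp add: power_mult_distrib less_imp_le)
  moreover have "(\<Sum>\<^sub>\<infinity>j. (a j * y j)\<^sup>2) \<ge> 0"
    by (intro infsum_nonneg) simp
  ultimately show ?thesis unfolding wnorm_def by (simp add: powr_half_sqrt)
qed

lemma wnorm_2_finite:
  assumes "\<And>j. a j > 0" and "wnorm a 2 y < \<infinity>"
  shows "(\<lambda>j. (a j * y j)\<^sup>2) summable_on UNIV"
    and "real_of_ereal (wnorm a 2 y) = sqrt (\<Sum>\<^sub>\<infinity>j. (a j * y j)\<^sup>2)"
  using assms(2) unfolding wnorm_2_eq[OF assms(1)] by (auto split: if_splits)

lemma wnorm_2_finite_support:
  assumes "\<And>j. a j > 0" and "finite G" and "\<And>j. j \<notin> G \<Longrightarrow> y j = 0"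
  shows "wnorm a 2 y = ereal (sqrt (\<Sum>j\<in>G. (a j * y j)\<^sup>2))"
proof -
  have "((\<lambda>j. (a j * y j)\<^sup>2) has_sum (\<Sum>j\<in>G. (a j * y j)\<^sup>2)) UNIV"
    using assms(2,3) by (intro has_sum_finite_neutralI) auto
  then show ?thesis unfolding wnorm_2_eq[OF assms(1)] by (auto simp: summable_on_def infsumI)
qed

section \<open>The \<open>k\<^sub>t\<close> quasi-norm\<close>

definition ksummand :: "('i \<Rightarrow> real) \<Rightarrow> ('i \<Rightarrow> real) \<Rightarrow> ('i \<Rightarrow> real) \<Rightarrow> real \<Rightarrow> 'i \<Rightarrow> real" where
  "ksummand a r x \<alpha> j = (if r j / (a j)\<^sup>2 * \<alpha> < \<bar>x j\<bar> then (r j / a j)\<^sup>2 else 0)"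

lemma ksummand_nonneg: "ksummand a r x \<alpha> j \<ge> 0"
  unfolding ksummand_def by simp

lemma ksum_eq:
  "ksum a r x \<alpha> = (if ksummand a r x \<alpha> summable_on UNIV
     then ereal (\<Sum>\<^sub>\<infinity>j. ksummand a r x \<alpha> j) else \<infinity>)"
proof -
  have "(\<lambda>j. if (a j)\<^sup>2 powr -1 * r j * \<alpha> < \<bar>x j\<bar> then (a j)\<^sup>2 powr -1 * (r j)\<^sup>2 else 0)
      = ksummand a r x \<alpha>"
    by (intro ext) (simp add: ksummand_def power_divide)
  then show ?thesis unfolding ksum_def Let_def by simp
qed

lemma kterm_le_iff:
  assumes t: "0 < t" and \<alpha>: "0 < \<alpha>" and B: "0 \<le> B"
  shows "kterm a r t x \<alpha> \<le> ereal B \<longleftrightarrow>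
    ksummand a r x \<alpha> summable_on UNIV \<and> (\<Sum>\<^sub>\<infinity>j. ksummand a r x \<alpha> j) \<le> (B / \<alpha>) powr t"
proof (cases "ksummand a r x \<alpha> summable_on UNIV")
  case True
  define N where "N = (\<Sum>\<^sub>\<infinity>j. ksummand a r x \<alpha> j)"
  have N: "0 \<le> N" unfolding N_def by (intro infsum_nonneg ksummand_nonneg)
  have "\<alpha> * N powr (1 / t) \<le> B \<longleftrightarrow> N powr (1 / t) \<le> B / \<alpha>"
    using \<alpha> by (simp add: field_simps)
  also have "\<dots> \<longleftrightarrow> N \<le> (B / \<alpha>) powr t"
  proof
    assume "N powr (1 / t) \<le> B / \<alpha>"
    then have "(N powr (1 / t)) powr t \<le> (B / \<alpha>) powr t" using t by (intro powr_mono2) auto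
    then show "N \<le> (B / \<alpha>) powr t" using N t by (simp add: powr_powr)
  next
    assume "N \<le> (B / \<alpha>) powr t"
    then have "N powr (1 / t) \<le> ((B / \<alpha>) powr t) powr (1 / t)" using N t by (intro powr_mono2) auto
    then show "N powr (1 / t) \<le> B / \<alpha>" using B \<alpha> t by (simp add: powr_powr)
  qed
  finally show ?thesis using True unfolding kterm_def ksum_eq N_def by simp
qed (simp add: kterm_def ksum_eq)

lemma knorm_le_iff:
  assumes "0 < t" and "0 \<le> B"
  shows "knorm a r t x \<le> ereal B \<longleftrightarrow> (\<forall>\<alpha>>0.
    ksummand a r x \<alpha> summable_on UNIV \<and> (\<Sum>\<^sub>\<infinity>j. ksummand a r x \<alpha> j) \<le> (B / \<alpha>) powr t)"
  unfolding knorm_def SUP_le_iff using kterm_le_iff[OF assms(1) _ assms(2), of _ a r x] by auto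

lemma knorm_nonneg: "0 \<le> knorm a r t x"
proof -
  have "0 \<le> kterm a r t x 1" unfolding kterm_def by simp
  also have "\<dots> \<le> knorm a r t x" unfolding knorm_def by (rule SUP_upper) simp
  finally show ?thesis .
qed

section \<open>Condition (iii) bounds the \<open>k\<^sub>t\<close> quasi-norm\<close>

lemma le_of_interpolation_ineq:
  fixes t \<alpha> K S :: real
  assumes t: "t < 2" and \<alpha>: "0 < \<alpha>" and K: "0 < K" and S: "0 \<le> S"
    and ineq: "\<alpha> * S \<le> K * (\<alpha> * sqrt S) powr ((2 - 2 * t) / (2 - t))"
  shows "S \<le> K powr (2 - t) * \<alpha> powr (- t)"
proof (cases "S = 0")
  case False
  with S have S: "0 < S" by simp
  have "ln \<alpha> + ln S \<le> ln K + (2 - 2 * t) / (2 - t) * (ln \<alpha> + ln S / 2)"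
    using ln_mono[OF ineq] \<alpha> S K by (simp add: ln_mult ln_sqrt)
  then have "(2 - t) * (ln \<alpha> + ln S) \<le> (2 - t) * ln K + (2 - 2 * t) * (ln \<alpha> + ln S / 2)"
    using t by (simp add: field_simps)
  then have "ln S \<le> (2 - t) * ln K - t * ln \<alpha>"
    by (simp add: algebra_simps)
  then have "exp (ln S) \<le> exp ((2 - t) * ln K + (- t) * ln \<alpha>)" by simp
  then show ?thesis using S K \<alpha> by (simp add: powr_def mult_exp_exp)
qed (use K \<alpha> in simp)

lemma ksummand_sum_le_if_cond_iii:
  fixes a r xp :: "'i \<Rightarrow> real"
  assumes a: "\<And>j. a j > 0" and r: "\<And>j. r j > 0" and xp: "xp \<in> lspace r 1"
    and t: "t < 2" and K: "0 < K" and iii: "cond_iii a r t xp K"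
    and \<alpha>: "0 < \<alpha>" and F: "finite F"
  shows "sum (ksummand a r xp \<alpha>) F \<le> K powr (2 - t) * \<alpha> powr (- t)"
proof -
  define w where "w j = r j / (a j)\<^sup>2 * \<alpha>" for j
  define G where "G = {j\<in>F. w j < \<bar>xp j\<bar>}"
  define S where "S = sum (ksummand a r xp \<alpha>) F"
  have w: "0 < w j" for j using a[of j] r[of j] \<alpha> by (simp add: w_def)
  have G: "finite G" using F by (simp add: G_def)
  have S_eq: "S = (\<Sum>j\<in>G. (r j / a j)\<^sup>2)"
    unfolding S_def G_def w_def ksummand_def using F by (simp add: sum.inter_filter)
  have S: "0 \<le> S" unfolding S_def by (intro sum_nonneg ksummand_nonneg)
  define x where "x j = (if j \<in> G then xp j - sgn (xp j) * w j else xp j)" for j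
  have abs_x: "\<bar>x j\<bar> = (if j \<in> G then \<bar>xp j\<bar> - w j else \<bar>xp j\<bar>)" for j
    using w[of j] by (cases "xp j > 0") (auto simp: x_def G_def sgn_if)
  have x_le: "\<bar>x j\<bar> \<le> \<bar>xp j\<bar>" for j
    using abs_x[of j] w[of j] by simp
  have x: "x \<in> lspace r 1" using lspace_1_if_abs_le[OF r xp x_le] .
  have rw: "r j * w j = \<alpha> * (r j / a j)\<^sup>2" for j
    by (simp add: w_def power2_eq_square)
  have "((\<lambda>j. r j * \<bar>xp j\<bar> - r j * \<bar>x j\<bar>) has_sum
      (real_of_ereal (wnorm r 1 xp) - real_of_ereal (wnorm r 1 x))) UNIV"
    by (intro has_sum_diff has_sum_wnorm_1 r xp x)
  moreover have "((\<lambda>j. r j * \<bar>xp j\<bar> - r j * \<bar>x j\<bar>) has_sum \<alpha> * S) UNIV"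
    using G by (intro has_sum_finite_neutralI)
      (auto simp: abs_x S_eq rw sum_distrib_left algebra_simps)
  ultimately have norm_1: "real_of_ereal (wnorm r 1 xp) - real_of_ereal (wnorm r 1 x) = \<alpha> * S"
    by (metis infsumI)
  have "(a j * (xp j - x j))\<^sup>2 = \<alpha>\<^sup>2 * (r j / a j)\<^sup>2" if "j \<in> G" for j
  proof -
    have "(sgn (xp j))\<^sup>2 = 1" using that w[of j] by (auto simp: G_def sgn_if)
    then show ?thesis using a[of j] that
      by (simp add: x_def w_def field_simps)
  qed
  then have "wnorm a 2 (\<lambda>j. xp j - x j) = ereal (sqrt (\<alpha>\<^sup>2 * S))"
    using G by (subst wnorm_2_finite_support[OF a G]) (auto simp: x_def S_eq sum_distrib_left)
  then have norm_2: "wnorm a 2 (\<lambda>j. xp j - x j) = ereal (\<alpha> * sqrt S)"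
    using \<alpha> by (simp add: real_sqrt_mult)
  have "\<alpha> * S \<le> K * (\<alpha> * sqrt S) powr ((2 - 2 * t) / (2 - t))"
    using iii[unfolded cond_iii_def, rule_format, of x] x_le norm_2 unfolding norm_1 by simp
  then show ?thesis
    unfolding S_def[symmetric] by (rule le_of_interpolation_ineq[OF t \<alpha> K S])
qed

lemma knorm_le_if_cond_iii:
  fixes a r xp :: "'i \<Rightarrow> real"
  assumes a: "\<And>j. a j > 0" and r: "\<And>j. r j > 0" and xp: "xp \<in> lspace r 1"
    and t: "0 < t" "t < 2" and K: "0 < K" and iii: "cond_iii a r t xp K"
  shows "knorm a r t xp \<le> ereal (K powr ((2 - t) / t))"
  unfolding knorm_le_iff[OF t(1) powr_ge_zero]
proof (intro allI impI conjI)
  fix \<alpha> :: real assume \<alpha>: "0 < \<alpha>"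
  note bound = ksummand_sum_le_if_cond_iii[OF a r xp t(2) K iii \<alpha>]
  show summable: "ksummand a r xp \<alpha> summable_on UNIV"
    by (rule nonneg_bdd_above_summable_on) (auto intro!: bdd_aboveI2 ksummand_nonneg bound)
  have "(K powr ((2 - t) / t) / \<alpha>) powr t = K powr (2 - t) * \<alpha> powr (- t)"
    using K \<alpha> t by (simp add: powr_divide powr_powr powr_minus_divide)
  then show "(\<Sum>\<^sub>\<infinity>j. ksummand a r xp \<alpha> j) \<le> (K powr ((2 - t) / t) / \<alpha>) powr t"
    using infsum_le_finite_sums[OF summable bound] by simp
qed

section \<open>A \<open>k\<^sub>t\<close> bound implies condition (ii)\<close>

lemma large_coordinates_sum_le:
  fixes a r xp h :: "'i \<Rightarrow> real"
  assumes a: "\<And>j. a j > 0" and r: "\<And>j. r j > 0" and t: "0 < t"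
    and M: "0 \<le> M" and kn: "knorm a r t xp \<le> ereal M"
    and \<alpha>: "0 < \<alpha>" and G: "finite G" and large: "\<And>j. j \<in> G \<Longrightarrow> r j / (a j)\<^sup>2 * \<alpha> < \<bar>xp j\<bar>"
    and h: "(\<lambda>j. (a j * h j)\<^sup>2) summable_on UNIV"
  shows "(\<Sum>j\<in>G. r j * \<bar>h j\<bar>) \<le> (M / \<alpha>) powr (t / 2) * sqrt (\<Sum>\<^sub>\<infinity>j. (a j * h j)\<^sup>2)"
proof -
  have ksummand: "ksummand a r xp \<alpha> summable_on UNIV" "(\<Sum>\<^sub>\<infinity>j. ksummand a r xp \<alpha> j) \<le> (M / \<alpha>) powr t"
    using kn \<alpha> unfolding knorm_le_iff[OF t M] by auto
  have "r j * \<bar>h j\<bar> = \<bar>r j / a j\<bar> * \<bar>a j * h j\<bar>" for j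
    using a[of j] r[of j] by (simp add: abs_mult)
  then have "(\<Sum>j\<in>G. r j * \<bar>h j\<bar>) = (\<Sum>j\<in>G. \<bar>r j / a j\<bar> * \<bar>a j * h j\<bar>)"
    by simp
  also have "\<dots> \<le> L2_set (\<lambda>j. r j / a j) G * L2_set (\<lambda>j. a j * h j) G"
    by (rule L2_set_mult_ineq)
  also have "\<dots> \<le> (M / \<alpha>) powr (t / 2) * sqrt (\<Sum>\<^sub>\<infinity>j. (a j * h j)\<^sup>2)"
  proof (rule mult_mono)
    have "(\<Sum>j\<in>G. (r j / a j)\<^sup>2) = (\<Sum>j\<in>G. ksummand a r xp \<alpha> j)"
      using large by (intro sum.cong) (auto simp: ksummand_def)
    also have "\<dots> \<le> (\<Sum>\<^sub>\<infinity>j. ksummand a r xp \<alpha> j)"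
      using G by (intro finite_sum_le_infsum ksummand ksummand_nonneg) auto
    also have "\<dots> \<le> (M / \<alpha>) powr t" by (rule ksummand(2))
    finally have "L2_set (\<lambda>j. r j / a j) G \<le> sqrt ((M / \<alpha>) powr t)"
      unfolding L2_set_def by (rule real_sqrt_le_mono)
    also have "\<dots> = (M / \<alpha>) powr (t / 2)"
      by (simp add: powr_half_sqrt[symmetric] powr_powr)
    finally show "L2_set (\<lambda>j. r j / a j) G \<le> (M / \<alpha>) powr (t / 2)" .
    show "L2_set (\<lambda>j. a j * h j) G \<le> sqrt (\<Sum>\<^sub>\<infinity>j. (a j * h j)\<^sup>2)"
      unfolding L2_set_def using G by (intro real_sqrt_le_mono finite_sum_le_infsum h) auto
  qed (auto simp: L2_set_def sum_nonneg)
  finally show ?thesis .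
qed

lemma dyadic_level_exists:
  fixes y c :: real
  assumes "0 < y" and "y \<le> c"
  obtains k :: nat where "c / 2 ^ (k + 1) < y" and "y \<le> c / 2 ^ k"
proof -
  define k where "k = nat \<lfloor>log 2 (c / y)\<rfloor>"
  have "\<lfloor>log 2 (c / y)\<rfloor> = int k" using assms by (simp add: k_def)
  then have "2 powr real k \<le> c / y \<and> c / y < 2 powr (real k + 1)"
    using assms floor_log_eq_powr_iff[of "c / y" 2 "int k"] by simp
  then have "2 ^ k \<le> c / y" and "c / y < 2 ^ (k + 1)"
    using powr_realpow[of 2 k] powr_realpow[of 2 "k + 1"] by (simp_all add: add.commute)
  with assms that[of k] show ?thesis by (simp add: field_simps)
qed

lemma small_coordinate_le_ksummand:
  assumes a: "a j > 0" and r: "r j > 0" and \<alpha>: "0 < \<alpha>"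
    and small: "\<not> r j / (a j)\<^sup>2 * \<alpha> < \<bar>xp j\<bar>"
  obtains k :: nat where "r j * \<bar>xp j\<bar> \<le> \<alpha> / 2 ^ k * ksummand a r xp (\<alpha> / 2 ^ (k + 1)) j"
proof (cases "xp j = 0")
  case True
  with that[of 0] show ?thesis using \<alpha> by (simp add: ksummand_nonneg)
next
  case False
  then obtain k :: nat where
    lo: "r j / (a j)\<^sup>2 * \<alpha> / 2 ^ (k + 1) < \<bar>xp j\<bar>" and hi: "\<bar>xp j\<bar> \<le> r j / (a j)\<^sup>2 * \<alpha> / 2 ^ k"
    using dyadic_level_exists[of "\<bar>xp j\<bar>" "r j / (a j)\<^sup>2 * \<alpha>"] small False by force
  have "r j * \<bar>xp j\<bar> \<le> r j * (r j / (a j)\<^sup>2 * \<alpha> / 2 ^ k)"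
    using hi r by (intro mult_left_mono) auto
  also have "\<dots> = \<alpha> / 2 ^ k * ksummand a r xp (\<alpha> / 2 ^ (k + 1)) j"
    using lo by (simp add: ksummand_def power2_eq_square ac_simps)
  finally show ?thesis by (rule that)
qed

lemma dyadic_geometric_sum_le:
  fixes t \<alpha> M :: real
  assumes t: "t < 1" and \<alpha>: "0 < \<alpha>" and M: "0 \<le> M"
  shows "(\<Sum>k<N. \<alpha> / 2 ^ k * (M / (\<alpha> / 2 ^ (k + 1))) powr t)
    \<le> 2 powr t / (1 - 2 powr (t - 1)) * M powr t * \<alpha> powr (1 - t)"
proof -
  define q :: real where "q = 2 powr (t - 1)"
  have q: "0 < q" "q < 1" using t by (auto simp: q_def powr_less_one)
  have "\<alpha> / 2 ^ k * (M / (\<alpha> / 2 ^ (k + 1))) powr t = 2 powr t * M powr t * \<alpha> powr (1 - t) * q ^ k"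
    for k :: nat
    using \<alpha> M by (simp add: q_def powr_divide powr_mult powr_diff powr_realpow[symmetric] powr_powr
        field_simps)
  then have "(\<Sum>k<N. \<alpha> / 2 ^ k * (M / (\<alpha> / 2 ^ (k + 1))) powr t)
      = 2 powr t * M powr t * \<alpha> powr (1 - t) * ((1 - q ^ N) / (1 - q))"
    using q by (simp add: sum_distrib_left[symmetric] sum_gp_strict)
  also have "\<dots> \<le> 2 powr t * M powr t * \<alpha> powr (1 - t) * (1 / (1 - q))"
    using q by (intro mult_left_mono divide_right_mono) auto
  finally show ?thesis by (simp add: q_def)
qed

lemma small_coordinates_sum_le:
  fixes a r xp :: "'i \<Rightarrow> real"
  assumes a: "\<And>j. a j > 0" and r: "\<And>j. r j > 0" and t: "0 < t" "t < 1"
    and M: "0 \<le> M" and kn: "knorm a r t xp \<le> ereal M"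
    and \<alpha>: "0 < \<alpha>" and G: "finite G" and small: "\<And>j. j \<in> G \<Longrightarrow> \<not> r j / (a j)\<^sup>2 * \<alpha> < \<bar>xp j\<bar>"
  shows "(\<Sum>j\<in>G. r j * \<bar>xp j\<bar>) \<le> 2 powr t / (1 - 2 powr (t - 1)) * M powr t * \<alpha> powr (1 - t)"
proof -
  define g where "g j k = \<alpha> / 2 ^ k * ksummand a r xp (\<alpha> / 2 ^ (k + 1)) j" for j and k :: nat
  have g: "0 \<le> g j k" for j k using \<alpha> by (simp add: g_def ksummand_nonneg)
  have "\<forall>j\<in>G. \<exists>k. r j * \<bar>xp j\<bar> \<le> g j k"
    using small_coordinate_le_ksummand[where a = a and r = r, OF a r \<alpha>] small unfolding g_def by metis
  then obtain k where k: "\<And>j. j \<in> G \<Longrightarrow> r j * \<bar>xp j\<bar> \<le> g j (k j)"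
    by metis
  define N where "N = Suc (Max (k ` G))"
  have "(\<Sum>j\<in>G. r j * \<bar>xp j\<bar>) \<le> (\<Sum>j\<in>G. \<Sum>n<N. g j n)"
  proof (rule sum_mono)
    fix j assume "j \<in> G"
    then have "k j < N" using G by (simp add: N_def le_imp_less_Suc)
    then have "g j (k j) \<le> (\<Sum>n<N. g j n)" using g by (intro member_le_sum) auto
    with k[OF \<open>j \<in> G\<close>] show "r j * \<bar>xp j\<bar> \<le> (\<Sum>n<N. g j n)" by simp
  qed
  also have "\<dots> = (\<Sum>n<N. \<alpha> / 2 ^ n * (\<Sum>j\<in>G. ksummand a r xp (\<alpha> / 2 ^ (n + 1)) j))"
    unfolding g_def by (subst sum.swap) (simp add: sum_distrib_left)
  also have "\<dots> \<le> (\<Sum>n<N. \<alpha> / 2 ^ n * (M / (\<alpha> / 2 ^ (n + 1))) powr t)"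
  proof (intro sum_mono mult_left_mono)
    fix n :: nat
    have "0 < \<alpha> / 2 ^ (n + 1)" using \<alpha> by simp
    from kn[unfolded knorm_le_iff[OF t(1) M], rule_format, OF this]
    have "ksummand a r xp (\<alpha> / 2 ^ (n + 1)) summable_on UNIV"
      and bound: "(\<Sum>\<^sub>\<infinity>j. ksummand a r xp (\<alpha> / 2 ^ (n + 1)) j) \<le> (M / (\<alpha> / 2 ^ (n + 1))) powr t"
      by auto
    then have "(\<Sum>j\<in>G. ksummand a r xp (\<alpha> / 2 ^ (n + 1)) j)
        \<le> (\<Sum>\<^sub>\<infinity>j. ksummand a r xp (\<alpha> / 2 ^ (n + 1)) j)"
      using G by (intro finite_sum_le_infsum ksummand_nonneg) auto
    with bound show "(\<Sum>j\<in>G. ksummand a r xp (\<alpha> / 2 ^ (n + 1)) j) \<le> (M / (\<alpha> / 2 ^ (n + 1))) powr t"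
      by linarith
  qed (use \<alpha> in simp)
  also have "\<dots> \<le> 2 powr t / (1 - 2 powr (t - 1)) * M powr t * \<alpha> powr (1 - t)"
    by (rule dyadic_geometric_sum_le[OF t(2) \<alpha> M])
  finally show ?thesis .
qed

lemma sum_min_le:
  fixes a r xp h :: "'i \<Rightarrow> real"
  assumes a: "\<And>j. a j > 0" and r: "\<And>j. r j > 0" and t: "0 < t" "t < 1"
    and M: "0 \<le> M" and kn: "knorm a r t xp \<le> ereal M"
    and \<alpha>: "0 < \<alpha>" and F: "finite F" and h: "(\<lambda>j. (a j * h j)\<^sup>2) summable_on UNIV"
  shows "(\<Sum>j\<in>F. r j * min \<bar>h j\<bar> \<bar>xp j\<bar>)
    \<le> (M / \<alpha>) powr (t / 2) * sqrt (\<Sum>\<^sub>\<infinity>j. (a j * h j)\<^sup>2)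
      + 2 powr t / (1 - 2 powr (t - 1)) * M powr t * \<alpha> powr (1 - t)"
proof -
  define P where "P j \<longleftrightarrow> r j / (a j)\<^sup>2 * \<alpha> < \<bar>xp j\<bar>" for j
  have "(\<Sum>j\<in>F. r j * min \<bar>h j\<bar> \<bar>xp j\<bar>)
      = (\<Sum>j\<in>{j\<in>F. P j}. r j * min \<bar>h j\<bar> \<bar>xp j\<bar>) + (\<Sum>j\<in>{j\<in>F. \<not> P j}. r j * min \<bar>h j\<bar> \<bar>xp j\<bar>)"
    using F by (subst sum.union_disjoint[symmetric]) (auto intro!: sum.cong)
  also have "\<dots> \<le> (\<Sum>j\<in>{j\<in>F. P j}. r j * \<bar>h j\<bar>) + (\<Sum>j\<in>{j\<in>F. \<not> P j}. r j * \<bar>xp j\<bar>)"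
    using r by (intro add_mono sum_mono mult_left_mono) (auto simp: less_imp_le)
  also have "\<dots> \<le> (M / \<alpha>) powr (t / 2) * sqrt (\<Sum>\<^sub>\<infinity>j. (a j * h j)\<^sup>2)
      + 2 powr t / (1 - 2 powr (t - 1)) * M powr t * \<alpha> powr (1 - t)"
    using F unfolding P_def
    by (intro add_mono large_coordinates_sum_le[OF a r t(1) M kn \<alpha> _ _ h]
        small_coordinates_sum_le[OF a r t M kn \<alpha>]) auto
  finally show ?thesis .
qed

lemma balanced_bound:
  fixes L M D C t :: real
  assumes t: "t < 2" and M: "0 \<le> M" and D: "0 < D"
    and bound: "\<And>\<alpha>. 0 < \<alpha> \<Longrightarrow> L \<le> (M / \<alpha>) powr (t / 2) * D + C * M powr t * \<alpha> powr (1 - t)"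
  shows "L \<le> (1 + C) * M powr (t / (2 - t)) * D powr ((2 - 2 * t) / (2 - t))"
proof (cases "M = 0")
  case True
  then show ?thesis using bound[of 1] by simp
next
  case False
  with M have M: "0 < M" by simp
  have t2: "0 < 2 - t" using t by simp
  define \<alpha> where "\<alpha> = (D powr 2 / M powr t) powr (1 / (2 - t))"
  have \<alpha>: "0 < \<alpha>" using M D by (simp add: \<alpha>_def)
  have ln_\<alpha>: "ln \<alpha> = (2 * ln D - t * ln M) / (2 - t)"
    using M D by (simp add: \<alpha>_def ln_div ln_realpow)
  define B where "B = M powr (t / (2 - t)) * D powr ((2 - 2 * t) / (2 - t))"
  have B: "0 < B" using M D by (simp add: B_def)
  have ln_B: "ln B = (t * ln M + (2 - 2 * t) * ln D) / (2 - t)"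
    using M D by (simp add: B_def ln_mult add_divide_distrib)
  have "ln ((M / \<alpha>) powr (t / 2) * D) = ln B"
    using M D \<alpha> t2 by (simp add: ln_mult ln_div ln_\<alpha> ln_B field_simps)
  then have first: "(M / \<alpha>) powr (t / 2) * D = B"
    using M D \<alpha> B by simp
  have "ln (M powr t * \<alpha> powr (1 - t)) = ln B"
    using M D \<alpha> t2 by (simp add: ln_mult ln_\<alpha> ln_B field_simps)
  then have second: "M powr t * \<alpha> powr (1 - t) = B"
    using M \<alpha> B by simp
  have "L \<le> B + C * B" using bound[OF \<alpha>] unfolding first mult.assoc second .
  then show ?thesis by (simp add: B_def algebra_simps)
qed

lemma cond_ii_constant_eq:
  fixes t :: real
  assumes "t < 1"
  shows "2 + 4 / (2 powr (1 - t) - 1) = 2 * (1 + 2 powr t / (1 - 2 powr (t - 1)))"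
proof -
  define q :: real where "q = 2 powr (t - 1)"
  have q: "0 < q" "q < 1" using assms by (auto simp: q_def powr_less_one)
  have inv: "2 powr (1 - t) = 1 / q" by (simp add: q_def powr_minus_divide[symmetric])
  have double: "2 powr t = 2 * q" using powr_add[of 2 "t - 1" 1] by (simp add: q_def)
  show ?thesis unfolding inv double q_def[symmetric] using q by (simp add: field_simps)
qed

lemma cond_ii_if_knorm_le:
  fixes a r xp :: "'i \<Rightarrow> real"
  assumes a: "\<And>j. a j > 0" and r: "\<And>j. r j > 0" and xp: "xp \<in> lspace r 1"
    and t: "0 < t" "t < 1" and M: "0 \<le> M" and kn: "knorm a r t xp \<le> ereal M"
  shows "cond_ii a r t xp ((2 + 4 / (2 powr (1 - t) - 1)) * M powr (t / (2 - t)))"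
  unfolding cond_ii_def
proof (intro ballI impI)
  fix x assume x: "x \<in> lspace r 1" and fin: "wnorm a 2 (\<lambda>j. xp j - x j) < \<infinity>"
  define h where "h j = xp j - x j" for j
  define D where "D = real_of_ereal (wnorm a 2 h)"
  define C :: real where "C = 2 powr t / (1 - 2 powr (t - 1))"
  define e where "e = (2 - 2 * t) / (2 - t)"
  define L where "L = (\<Sum>\<^sub>\<infinity>j. r j * min \<bar>h j\<bar> \<bar>xp j\<bar>)"
  have C: "0 \<le> C" using t by (simp add: C_def powr_less_one less_imp_le)
  have h: "(\<lambda>j. (a j * h j)\<^sup>2) summable_on UNIV" and D_eq: "D = sqrt (\<Sum>\<^sub>\<infinity>j. (a j * h j)\<^sup>2)"
    using wnorm_2_finite[OF a fin] unfolding h_def D_def by simp_all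
  have min_summable: "(\<lambda>j. r j * min \<bar>h j\<bar> \<bar>xp j\<bar>) summable_on UNIV"
  proof (rule summable_on_comparison_test)
    show "(\<lambda>j. r j * \<bar>xp j\<bar>) summable_on UNIV" using xp by (simp add: lspace_1_iff[OF r])
  qed (use r in \<open>auto intro: mult_left_mono simp: less_imp_le\<close>)
  have "L \<le> (1 + C) * M powr (t / (2 - t)) * D powr e"
  proof (cases "D = 0")
    case True
    have "h j = 0" for j
    proof -
      have "(\<Sum>i\<in>{j}. (a i * h i)\<^sup>2) \<le> (\<Sum>\<^sub>\<infinity>i. (a i * h i)\<^sup>2)"
        by (rule finite_sum_le_infsum[OF h]) auto
      then show "h j = 0" using True a[of j] by (simp add: D_eq)
    qed
    then show ?thesis using C by (simp add: L_def)
  next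
    case False
    then have "0 < D" by (simp add: D_eq infsum_nonneg order_less_le)
    show ?thesis unfolding e_def
    proof (rule balanced_bound[OF _ M \<open>0 < D\<close>])
      show "t < 2" using t by simp
    next
      fix \<alpha> :: real assume "0 < \<alpha>"
      show "L \<le> (M / \<alpha>) powr (t / 2) * D + C * M powr t * \<alpha> powr (1 - t)"
        unfolding L_def D_eq C_def
        by (rule infsum_le_finite_sums[OF min_summable sum_min_le[OF a r t M kn \<open>0 < \<alpha>\<close> _ h]])
    qed
  qed
  have "((\<lambda>j. r j * \<bar>h j\<bar> + r j * \<bar>xp j\<bar> - r j * \<bar>x j\<bar>) has_sum
      (real_of_ereal (wnorm r 1 h) + real_of_ereal (wnorm r 1 xp) - real_of_ereal (wnorm r 1 x))) UNIV"
    using x xp lspace_1_diff[OF r xp x] unfolding h_def[abs_def]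
    by (intro has_sum_diff has_sum_add has_sum_wnorm_1 r)
  moreover have "((\<lambda>j. 2 * (r j * min \<bar>h j\<bar> \<bar>xp j\<bar>)) has_sum 2 * L) UNIV"
    unfolding L_def by (intro has_sum_cmult_right has_sum_infsum min_summable)
  moreover have "r j * \<bar>h j\<bar> + r j * \<bar>xp j\<bar> - r j * \<bar>x j\<bar> \<le> 2 * (r j * min \<bar>h j\<bar> \<bar>xp j\<bar>)" for j
  proof -
    have "\<bar>h j\<bar> + \<bar>xp j\<bar> - \<bar>x j\<bar> \<le> 2 * min (\<bar>h j\<bar>) (\<bar>xp j\<bar>)"
      unfolding h_def by (simp add: min_def) linarith
    from mult_left_mono[OF this, of "r j"] show ?thesis
      using r[of j] by (simp add: algebra_simps)
  qed
  ultimately have "real_of_ereal (wnorm r 1 h) + real_of_ereal (wnorm r 1 xp) - real_of_ereal (wnorm r 1 x)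
      \<le> 2 * L"
    by (rule has_sum_mono)
  also have "\<dots> \<le> (2 + 4 / (2 powr (1 - t) - 1)) * M powr (t / (2 - t)) * D powr e"
    using \<open>L \<le> _\<close> unfolding cond_ii_constant_eq[OF t(2)] C_def[symmetric] by (simp add: algebra_simps)
  finally show "real_of_ereal (wnorm r 1 (\<lambda>j. xp j - x j)) + real_of_ereal (wnorm r 1 xp)
      - real_of_ereal (wnorm r 1 x)
    \<le> (2 + 4 / (2 powr (1 - t) - 1)) * M powr (t / (2 - t))
      * real_of_ereal (wnorm a 2 (\<lambda>j. xp j - x j)) powr ((2 - 2 * t) / (2 - t))"
    unfolding h_def[abs_def] D_def e_def .
qed

lemma cond_ii_mono:
  assumes "cond_ii a r t xp K" and "K \<le> K'"
  shows "cond_ii a r t xp K'"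
  using assms unfolding cond_ii_def by (meson mult_right_mono order_trans powr_ge_zero)

lemma cond_iii_if_cond_ii:
  fixes a r xp :: "'i \<Rightarrow> real"
  assumes r: "\<And>j. r j > 0" and xp: "xp \<in> lspace r 1" and ii: "cond_ii a r t xp K"
  shows "cond_iii a r t xp K"
  unfolding cond_iii_def
proof (intro allI impI)
  fix x :: "'i \<Rightarrow> real"
  assume "\<forall>j. \<bar>x j\<bar> \<le> \<bar>xp j\<bar>" and fin: "wnorm a 2 (\<lambda>j. xp j - x j) < \<infinity>"
  then have "x \<in> lspace r 1" using lspace_1_if_abs_le[OF r xp] by blast
  with ii fin have "real_of_ereal (wnorm r 1 (\<lambda>j. xp j - x j)) + real_of_ereal (wnorm r 1 xp)
      - real_of_ereal (wnorm r 1 x)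
    \<le> K * real_of_ereal (wnorm a 2 (\<lambda>j. xp j - x j)) powr ((2 - 2 * t) / (2 - t))"
    unfolding cond_ii_def by blast
  moreover have "0 \<le> real_of_ereal (wnorm r 1 (\<lambda>j. xp j - x j))"
    by (simp add: real_of_ereal_pos wnorm_nonneg)
  ultimately show "real_of_ereal (wnorm r 1 xp) - real_of_ereal (wnorm r 1 x)
    \<le> K * real_of_ereal (wnorm a 2 (\<lambda>j. xp j - x j)) powr ((2 - 2 * t) / (2 - t))"
    by linarith
qed

theorem lemma4p2:
  fixes a r xp :: "'i::countable \<Rightarrow> real" and t :: real
  assumes "\<And>j. a j > 0" and "\<And>j. r j > 0"
    and "xp \<in> lspace r 1"
    and "0 < t" and "t < 1"
  shows "(xp \<in> kspace a r t \<longleftrightarrow> (\<exists>K>0. cond_ii a r t xp K))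
       \<and> ((\<exists>K>0. cond_ii a r t xp K) \<longleftrightarrow> (\<exists>K>0. cond_iii a r t xp K))
       \<and> (xp \<in> kspace a r t \<longrightarrow>
            cond_ii a r t xp ((2 + 4 / (2 powr (1 - t) - 1))
                              * real_of_ereal (knorm a r t xp) powr (t / (2 - t))))
       \<and> (\<forall>K>0. cond_iii a r t xp K \<longrightarrow> knorm a r t xp \<le> ereal (K powr ((2 - t) / t)))"
proof -
  note a = assms(1) and r = assms(2) and xp = assms(3) and t = assms(4,5)
  have ii_of_i: "cond_ii a r t xp ((2 + 4 / (2 powr (1 - t) - 1))
      * real_of_ereal (knorm a r t xp) powr (t / (2 - t)))" (is "cond_ii a r t xp ?K")
    if "xp \<in> kspace a r t"
  proof -
    have "knorm a r t xp = ereal (real_of_ereal (knorm a r t xp))"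
      using that knorm_nonneg[of a r t xp] unfolding kspace_def by (cases "knorm a r t xp") auto
    then show ?thesis
      by (intro cond_ii_if_knorm_le[OF a r xp t]) (simp_all add: real_of_ereal_pos knorm_nonneg)
  qed
  have bound_of_iii: "knorm a r t xp \<le> ereal (K powr ((2 - t) / t))"
    if "0 < K" and "cond_iii a r t xp K" for K
    using knorm_le_if_cond_iii[OF a r xp t(1) _ that] t(2) by simp
  have "xp \<in> kspace a r t \<Longrightarrow> \<exists>K>0. cond_ii a r t xp K"
    using ii_of_i cond_ii_mono[of a r t xp ?K "max ?K 1"] by (intro exI[of _ "max ?K 1"]) auto
  moreover have "(\<exists>K>0. cond_ii a r t xp K) \<Longrightarrow> \<exists>K>0. cond_iii a r t xp K"
    using cond_iii_if_cond_ii[OF r xp] by blast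
  moreover have "(\<exists>K>0. cond_iii a r t xp K) \<Longrightarrow> xp \<in> kspace a r t"
    using bound_of_iii unfolding kspace_def by (fastforce intro: order.strict_trans1)
  ultimately show ?thesis
    using ii_of_i bound_of_iii by blast
qed

end
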